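(* Let $k$ be a finite field, $r\ge2$, and $n\in\mathbb{N}$ with $n\le r$. For elements $b_1,\dots,b_n\in F_r$, the formula $\varphi(x_1,\dots,x_n)\equiv\bigwedge_{(\alpha_1,\dots,\alpha_n)\in k^n\setminus\{0\}}\neg\mathrm{Fit}(\alpha_1x_1+\dots+\alpha_nx_n)$, where $\mathrm{Fit}(x)\equiv\forall y\,(xyx=0)$, holds on $(b_1,\dots,b_n)$ in $F_r$ if and only if $b_1,\dots,b_n$ are linearly independent modulo $\mathrm{Fit}(F_r)$.
   Context: $F_r$ is the free metabelian Lie algebra over $k$ of rank $r$; products are left-normed; $\mathrm{Fit}(F_r)$ is its Fitting radical (sum of all nilpotent ideals), which equals the derived algebra $F_r^2$. *)

theory Defs
  imports Main "HOL-Library.Poly_Mapping"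
begin

text \<open>Free non-associative (magma) algebra over a field k: finitely supported
  k-linear combinations of binary bracketings (trees) of generators.\<close>

datatype mtree = MLeaf nat | MNode mtree mtree

fun leaves :: "mtree \<Rightarrow> nat set" where
  "leaves (MLeaf i) = {i}"
| "leaves (MNode s t) = leaves s \<union> leaves t"

type_synonym 'k magma_alg = "mtree \<Rightarrow>\<^sub>0 'k"

definition gen :: "nat \<Rightarrow> 'k::{zero,one} magma_alg" where
  "gen i = Poly_Mapping.single (MLeaf i) 1"

definition mmult :: "'k::comm_ring_1 magma_alg \<Rightarrow> 'k magma_alg \<Rightarrow> 'k magma_alg" where
  "mmult p q = (\<Sum>s\<in>Poly_Mapping.keys p. \<Sum>t\<in>Poly_Mapping.keys q.
       Poly_Mapping.single (MNode s t) (Poly_Mapping.lookup p s * Poly_Mapping.lookup q t))"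

definition msmult :: "'k::comm_ring_1 \<Rightarrow> 'k magma_alg \<Rightarrow> 'k magma_alg" where
  "msmult a p = Poly_Mapping.map (\<lambda>c. a * c) p"

definition magma :: "nat \<Rightarrow> 'k::comm_ring_1 magma_alg set" where
  "magma r = {p. \<forall>t\<in>Poly_Mapping.keys p. leaves t \<subseteq> {..<r}}"

text \<open>The ideal of the free magma algebra of rank r generated by all
  substitution instances of the identities x x = 0, the Jacobi identity and
  the metabelian identity (x y)(z w) = 0.  The quotient magma r / mb_ideal r
  is the free metabelian Lie algebra F_r of rank r.\<close>
inductive_set mb_ideal :: "nat \<Rightarrow> 'k::comm_ring_1 magma_alg set" for r :: nat where
  alt: "x \<in> magma r \<Longrightarrow> mmult x x \<in> mb_ideal r"
| jacobi: "x \<in> magma r \<Longrightarrow> y \<in> magma r \<Longrightarrow> z \<in> magma r \<Longrightarrow>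
     mmult (mmult x y) z + mmult (mmult y z) x + mmult (mmult z x) y \<in> mb_ideal r"
| metab: "x \<in> magma r \<Longrightarrow> y \<in> magma r \<Longrightarrow> z \<in> magma r \<Longrightarrow> w \<in> magma r \<Longrightarrow>
     mmult (mmult x y) (mmult z w) \<in> mb_ideal r"
| zero: "0 \<in> mb_ideal r"
| add: "a \<in> mb_ideal r \<Longrightarrow> b \<in> mb_ideal r \<Longrightarrow> a + b \<in> mb_ideal r"
| smult: "a \<in> mb_ideal r \<Longrightarrow> msmult c a \<in> mb_ideal r"
| multR: "a \<in> mb_ideal r \<Longrightarrow> y \<in> magma r \<Longrightarrow> mmult a y \<in> mb_ideal r"
| multL: "a \<in> mb_ideal r \<Longrightarrow> y \<in> magma r \<Longrightarrow> mmult y a \<in> mb_ideal r"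

text \<open>Equality in F_r of the classes of two representatives.\<close>
definition fr_eq :: "nat \<Rightarrow> 'k::comm_ring_1 magma_alg \<Rightarrow> 'k magma_alg \<Rightarrow> bool" where
  "fr_eq r p q \<longleftrightarrow> p - q \<in> mb_ideal r"

inductive_set magma_sq :: "nat \<Rightarrow> 'k::comm_ring_1 magma_alg set" for r :: nat where
  prod: "x \<in> magma r \<Longrightarrow> y \<in> magma r \<Longrightarrow> mmult x y \<in> magma_sq r"
| zero: "0 \<in> magma_sq r"
| add: "a \<in> magma_sq r \<Longrightarrow> b \<in> magma_sq r \<Longrightarrow> a + b \<in> magma_sq r"
| smult: "a \<in> magma_sq r \<Longrightarrow> msmult c a \<in> magma_sq r"

text \<open>The class of p lies in Fit(F_r) = F_r^2 (the image of magma_sq r).\<close>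
definition in_Fit_Fr :: "nat \<Rightarrow> 'k::comm_ring_1 magma_alg \<Rightarrow> bool" where
  "in_Fit_Fr r p \<longleftrightarrow> (\<exists>d\<in>magma_sq r. fr_eq r p d)"

text \<open>The first-order formula Fit(x) == forall y. x y x = 0, evaluated in F_r
  on the class of x (y ranges over representatives of all elements of F_r).\<close>
definition Fit_formula :: "nat \<Rightarrow> 'k::comm_ring_1 magma_alg \<Rightarrow> bool" where
  "Fit_formula r x \<longleftrightarrow> (\<forall>y\<in>magma r. fr_eq r (mmult (mmult x y) x) 0)"

definition lincomb :: "nat \<Rightarrow> (nat \<Rightarrow> 'k::comm_ring_1) \<Rightarrow> (nat \<Rightarrow> 'k magma_alg) \<Rightarrow> 'k magma_alg" where
  "lincomb n \<alpha> b = (\<Sum>i<n. msmult (\<alpha> i) (b i))"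

definition phi_holds :: "nat \<Rightarrow> nat \<Rightarrow> (nat \<Rightarrow> 'k::comm_ring_1 magma_alg) \<Rightarrow> bool" where
  "phi_holds r n b \<longleftrightarrow>
     (\<forall>\<alpha>::nat \<Rightarrow> 'k. (\<exists>i<n. \<alpha> i \<noteq> 0) \<longrightarrow> \<not> Fit_formula r (lincomb n \<alpha> b))"

definition lin_indep_mod_Fit :: "nat \<Rightarrow> nat \<Rightarrow> (nat \<Rightarrow> 'k::comm_ring_1 magma_alg) \<Rightarrow> bool" where
  "lin_indep_mod_Fit r n b \<longleftrightarrow>
     (\<forall>\<alpha>::nat \<Rightarrow> 'k. in_Fit_Fr r (lincomb n \<alpha> b) \<longrightarrow> (\<forall>i<n. \<alpha> i = 0))"

end

theory Submission imports Defs begin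

text \<open>The Fit formula holds exactly on the elements of \<open>F\<^sub>r\<^sup>2\<close>.
  If \<open>x \<equiv> d\<close> with \<open>d\<close> a sum of products, then \<open>x y x\<close> is congruent to \<open>(d y) d\<close>,
  which vanishes by the metabelian identity. If \<open>x \<notin> F\<^sub>r\<^sup>2\<close>, some generator \<open>x\<^sub>j\<close>
  occurs in \<open>x\<close> with a coefficient \<open>a \<noteq> 0\<close>. Send \<open>x\<^sub>j\<close> to \<open>e\<close>, another generator
  \<open>x\<^sub>j\<^sub>'\<close> to \<open>f\<close> and all others to \<open>0\<close> in the two-dimensional nonabelian Lie
  algebra \<open>[e, f] = f\<close>; this kills the defining ideal and maps \<open>x x\<^sub>j\<^sub>' x\<close> to
  \<open>-a\<^sup>2 f \<noteq> 0\<close>. The theorem is this equivalence applied to every linear combination.\<close>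

lemma lookup_msmult [simp]:
  "Poly_Mapping.lookup (msmult a p) t = a * Poly_Mapping.lookup p t"
  for p :: "'k::comm_ring_1 magma_alg"
  unfolding msmult_def by (simp add: Poly_Mapping.map.rep_eq when_def)

lemma lookup_mmult:
  fixes p q :: "'k::comm_ring_1 magma_alg"
  shows "Poly_Mapping.lookup (mmult p q) u =
    (case u of MLeaf i \<Rightarrow> 0 | MNode s t \<Rightarrow> Poly_Mapping.lookup p s * Poly_Mapping.lookup q t)"
proof (cases u)
  case (MLeaf i)
  then show ?thesis
    unfolding mmult_def by (simp add: lookup_sum lookup_single when_def)
next
  case (MNode s0 t0)
  let ?P = "Poly_Mapping.lookup p" and ?Q = "Poly_Mapping.lookup q"
  have "Poly_Mapping.lookup (mmult p q) u = (\<Sum>s\<in>Poly_Mapping.keys p. \<Sum>t\<in>Poly_Mapping.keys q.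
      if MNode s t = u then ?P s * ?Q t else 0)"
    unfolding mmult_def by (simp add: lookup_sum lookup_single when_def)
  also have "\<dots> = (\<Sum>s\<in>Poly_Mapping.keys p.
      if s = s0 then (\<Sum>t\<in>Poly_Mapping.keys q. if t = t0 then ?P s * ?Q t else 0) else 0)"
    using MNode by (intro sum.cong) auto
  also have "\<dots> = ?P s0 * ?Q t0"
    by (simp add: in_keys_iff)
  finally show ?thesis
    using MNode by simp
qed

lemma lookup_mmult_MNode [simp]:
  "Poly_Mapping.lookup (mmult p q) (MNode s t) = Poly_Mapping.lookup p s * Poly_Mapping.lookup q t"
  for p q :: "'k::comm_ring_1 magma_alg"
  by (simp add: lookup_mmult)

lemma lookup_mmult_MLeaf [simp]: "Poly_Mapping.lookup (mmult p q) (MLeaf i) = 0"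
  for p q :: "'k::comm_ring_1 magma_alg"
  by (simp add: lookup_mmult)

lemma keys_mmultD:
  fixes p q :: "'k::comm_ring_1 magma_alg"
  assumes "u \<in> Poly_Mapping.keys (mmult p q)"
  obtains s t where "u = MNode s t" "s \<in> Poly_Mapping.keys p" "t \<in> Poly_Mapping.keys q"
  using assms that by (cases u) (force simp: in_keys_iff lookup_mmult)+

lemma mmult_add_left: "mmult (a + b) c = mmult a c + mmult b c"
  and mmult_add_right: "mmult c (a + b) = mmult c a + mmult c b"
  and mmult_msmult_right: "mmult c (msmult k b) = msmult k (mmult c b)"
  for a b c :: "'k::comm_ring_1 magma_alg"
  by (rule poly_mapping_eqI; simp add: lookup_add lookup_mmult algebra_simps split: mtree.split)+

lemma mmult_zero_right [simp]: "mmult c 0 = 0"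
  for c :: "'k::comm_ring_1 magma_alg"
  by (rule poly_mapping_eqI) (simp add: lookup_mmult split: mtree.split)

lemma poly_mapping_sum_single:
  "p = (\<Sum>t\<in>Poly_Mapping.keys p. Poly_Mapping.single t (Poly_Mapping.lookup p t))"
  by (rule poly_mapping_eqI) (simp add: lookup_sum lookup_single when_def in_keys_iff)

lemma single_MNode:
  "Poly_Mapping.single (MNode s t) c =
    msmult c (mmult (Poly_Mapping.single s 1) (Poly_Mapping.single t 1))"
  for c :: "'k::comm_ring_1"
  by (rule poly_mapping_eqI) (simp add: lookup_mmult lookup_single when_def split: mtree.split)

lemma magma_zero [simp]: "0 \<in> magma r"
  by (simp add: magma_def)

lemma magma_add:
  fixes a b :: "'k::comm_ring_1 magma_alg"
  assumes "a \<in> magma r" and "b \<in> magma r"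
  shows "a + b \<in> magma r"
  using assms keys_add[of a b] unfolding magma_def by blast

lemma magma_msmult: "a \<in> magma r \<Longrightarrow> msmult c a \<in> magma r"
  for a :: "'k::comm_ring_1 magma_alg"
  unfolding magma_def by (auto simp: in_keys_iff)

lemma magma_mmult: "a \<in> magma r \<Longrightarrow> b \<in> magma r \<Longrightarrow> mmult a b \<in> magma r"
  for a b :: "'k::comm_ring_1 magma_alg"
  unfolding magma_def by (fastforce elim: keys_mmultD)

lemma magma_sum:
  "finite A \<Longrightarrow> (\<And>i. i \<in> A \<Longrightarrow> f i \<in> magma r) \<Longrightarrow> sum f A \<in> magma r"
  for f :: "_ \<Rightarrow> 'k::comm_ring_1 magma_alg"
  by (induction A rule: finite_induct) (simp_all add: magma_add)

lemma single_in_magma: "leaves s \<subseteq> {..<r} \<Longrightarrow> Poly_Mapping.single s (1::'k::comm_ring_1) \<in> magma r"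
  unfolding magma_def by simp

lemma gen_in_magma: "i < r \<Longrightarrow> (gen i :: 'k::comm_ring_1 magma_alg) \<in> magma r"
  unfolding gen_def by (rule single_in_magma) simp

lemma magma_sq_subset_magma: "d \<in> magma_sq r \<Longrightarrow> d \<in> magma r"
  for d :: "'k::comm_ring_1 magma_alg"
  by (induction rule: magma_sq.induct) (simp_all add: magma_add magma_msmult magma_mmult)

lemma magma_sq_sum:
  "finite A \<Longrightarrow> (\<And>i. i \<in> A \<Longrightarrow> f i \<in> magma_sq r) \<Longrightarrow> sum f A \<in> magma_sq r"
  for f :: "_ \<Rightarrow> 'k::comm_ring_1 magma_alg"
  by (induction A rule: finite_induct) (simp_all add: magma_sq.add magma_sq.zero)

lemma magma_sq_if_leaf_coeffs_zero:
  fixes x :: "'k::comm_ring_1 magma_alg"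
  assumes x: "x \<in> magma r" and leaf: "\<And>i. Poly_Mapping.lookup x (MLeaf i) = 0"
  shows "x \<in> magma_sq r"
proof (subst poly_mapping_sum_single, rule magma_sq_sum)
  fix t assume t: "t \<in> Poly_Mapping.keys x"
  then have "leaves t \<subseteq> {..<r}"
    using x unfolding magma_def by blast
  moreover obtain s u where t_eq: "t = MNode s u"
    using t leaf by (cases t) (auto simp: in_keys_iff)
  ultimately show "Poly_Mapping.single t (Poly_Mapping.lookup x t) \<in> magma_sq r"
    unfolding t_eq single_MNode by (intro magma_sq.smult magma_sq.prod single_in_magma) simp_all
qed simp

lemma mmult_mmult_magma_sq_in_mb_ideal:
  fixes d :: "'k::comm_ring_1 magma_alg"
  assumes "d \<in> magma_sq r" and "x \<in> magma r" and "y \<in> magma r"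
  shows "mmult (mmult x y) d \<in> mb_ideal r"
  using assms
proof (induction rule: magma_sq.induct)
  case (prod z w)
  then show ?case by (rule_tac mb_ideal.metab) auto
next
  case (add a b)
  then show ?case by (simp add: mmult_add_right mb_ideal.add)
next
  case (smult a c)
  then show ?case by (simp add: mmult_msmult_right mb_ideal.smult)
qed (simp add: mb_ideal.zero)

lemma Fit_formula_if_in_Fit_Fr:
  fixes x :: "'k::comm_ring_1 magma_alg"
  assumes x: "x \<in> magma r" and "in_Fit_Fr r x"
  shows "Fit_formula r x"
  unfolding Fit_formula_def fr_eq_def diff_zero
proof
  fix y :: "'k magma_alg" assume y: "y \<in> magma r"
  obtain d where d: "d \<in> magma_sq r" and e: "x - d \<in> mb_ideal r"
    using \<open>in_Fit_Fr r x\<close> unfolding in_Fit_Fr_def fr_eq_def by blast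
  have dm: "d \<in> magma r"
    using d by (rule magma_sq_subset_magma)
  have "mmult (mmult ((x - d) + d) y) ((x - d) + d) =
      mmult (mmult (x - d) y) ((x - d) + d) + mmult (mmult d y) (x - d) + mmult (mmult d y) d"
    by (simp only: mmult_add_left mmult_add_right add_ac)
  then have "mmult (mmult x y) x =
      mmult (mmult (x - d) y) x + mmult (mmult d y) (x - d) + mmult (mmult d y) d"
    by simp
  moreover have "mmult (mmult (x - d) y) x \<in> mb_ideal r"
    using e y x by (intro mb_ideal.multR)
  moreover have "mmult (mmult d y) (x - d) \<in> mb_ideal r"
    using e y dm by (intro mb_ideal.multL magma_mmult)
  moreover have "mmult (mmult d y) d \<in> mb_ideal r"
    using d dm y by (rule mmult_mmult_magma_sq_in_mb_ideal)
  ultimately show "mmult (mmult x y) x \<in> mb_ideal r"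
    by (simp add: mb_ideal.add)
qed

definition lin_ext :: "(mtree \<Rightarrow> 'k::comm_ring_1) \<Rightarrow> 'k magma_alg \<Rightarrow> 'k" where
  "lin_ext f p = (\<Sum>t\<in>Poly_Mapping.keys p. Poly_Mapping.lookup p t * f t)"

lemma lin_ext_superset:
  "finite S \<Longrightarrow> Poly_Mapping.keys p \<subseteq> S \<Longrightarrow> lin_ext f p = (\<Sum>t\<in>S. Poly_Mapping.lookup p t * f t)"
  unfolding lin_ext_def by (rule sum.mono_neutral_left) (auto simp: in_keys_iff)

lemma lin_ext_add: "lin_ext f (a + b) = lin_ext f a + lin_ext f b"
proof -
  let ?S = "Poly_Mapping.keys a \<union> Poly_Mapping.keys b"
  have "lin_ext f (a + b) = (\<Sum>t\<in>?S. Poly_Mapping.lookup (a + b) t * f t)"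
    by (rule lin_ext_superset) (auto dest: keys_add[THEN subsetD])
  also have "\<dots> = (\<Sum>t\<in>?S. Poly_Mapping.lookup a t * f t) + (\<Sum>t\<in>?S. Poly_Mapping.lookup b t * f t)"
    by (simp add: lookup_add distrib_right sum.distrib)
  also have "\<dots> = lin_ext f a + lin_ext f b"
    by (simp add: lin_ext_superset[of ?S a] lin_ext_superset[of ?S b])
  finally show ?thesis .
qed

lemma lin_ext_msmult: "lin_ext f (msmult c a) = c * lin_ext f a"
proof -
  have "lin_ext f (msmult c a) = (\<Sum>t\<in>Poly_Mapping.keys a. Poly_Mapping.lookup (msmult c a) t * f t)"
    by (rule lin_ext_superset) (auto simp: in_keys_iff)
  then show ?thesis
    by (simp add: lin_ext_def sum_distrib_left mult.assoc)
qed

lemma lin_ext_zero [simp]: "lin_ext f 0 = 0"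
  by (simp add: lin_ext_def)

lemma lin_ext_gen: "lin_ext f (gen i) = f (MLeaf i)"
  unfolding gen_def by (subst lin_ext_superset[of "{MLeaf i}"]) (auto simp: lookup_single)

lemma lin_ext_mmult:
  "lin_ext f (mmult p q) = (\<Sum>s\<in>Poly_Mapping.keys p. \<Sum>t\<in>Poly_Mapping.keys q.
      Poly_Mapping.lookup p s * Poly_Mapping.lookup q t * f (MNode s t))"
proof -
  let ?K = "Poly_Mapping.keys p \<times> Poly_Mapping.keys q"
  have "lin_ext f (mmult p q) = (\<Sum>u\<in>(\<lambda>(s, t). MNode s t) ` ?K. Poly_Mapping.lookup (mmult p q) u * f u)"
    by (rule lin_ext_superset) (auto elim!: keys_mmultD)
  also have "\<dots> = (\<Sum>(s, t)\<in>?K. Poly_Mapping.lookup (mmult p q) (MNode s t) * f (MNode s t))"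
    by (subst sum.reindex) (auto simp: inj_on_def case_prod_unfold)
  finally show ?thesis
    by (simp add: sum.cartesian_product)
qed

text \<open>A bracketing \<open>t\<close> of generators, evaluated in the Lie algebra with basis \<open>e, f\<close>
  and \<open>[e, f] = f\<close> after sending generator \<open>i\<close> to \<open>u i \<cdot> e + v i \<cdot> f\<close>, has
  \<open>e\<close>-coordinate \<open>aff_e u t\<close> and \<open>f\<close>-coordinate \<open>aff_f u v t\<close>.\<close>

fun aff_e :: "(nat \<Rightarrow> 'k::comm_ring_1) \<Rightarrow> mtree \<Rightarrow> 'k" where
  "aff_e u (MLeaf i) = u i"
| "aff_e u (MNode s t) = 0"

fun aff_f :: "(nat \<Rightarrow> 'k::comm_ring_1) \<Rightarrow> (nat \<Rightarrow> 'k) \<Rightarrow> mtree \<Rightarrow> 'k" where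
  "aff_f u v (MLeaf i) = v i"
| "aff_f u v (MNode s t) = aff_e u s * aff_f u v t - aff_e u t * aff_f u v s"

lemma lin_ext_aff_e_mmult: "lin_ext (aff_e u) (mmult p q) = 0"
  by (simp add: lin_ext_mmult)

lemma lin_ext_aff_f_mmult:
  "lin_ext (aff_f u v) (mmult p q) =
    lin_ext (aff_e u) p * lin_ext (aff_f u v) q - lin_ext (aff_e u) q * lin_ext (aff_f u v) p"
proof -
  let ?P = "Poly_Mapping.lookup p" and ?Q = "Poly_Mapping.lookup q"
  let ?e = "aff_e u" and ?f = "aff_f u v"
  have "lin_ext ?f (mmult p q) = (\<Sum>s\<in>Poly_Mapping.keys p. \<Sum>t\<in>Poly_Mapping.keys q.
      (?P s * ?e s) * (?Q t * ?f t) - (?Q t * ?e t) * (?P s * ?f s))"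
    by (simp add: lin_ext_mmult algebra_simps)
  also have "\<dots> = (\<Sum>s\<in>Poly_Mapping.keys p. \<Sum>t\<in>Poly_Mapping.keys q. (?P s * ?e s) * (?Q t * ?f t))
      - (\<Sum>t\<in>Poly_Mapping.keys q. \<Sum>s\<in>Poly_Mapping.keys p. (?Q t * ?e t) * (?P s * ?f s))"
    by (simp add: sum_subtractf sum.swap[of _ "Poly_Mapping.keys q"])
  also have "\<dots> = lin_ext ?e p * lin_ext ?f q - lin_ext ?e q * lin_ext ?f p"
    by (simp add: lin_ext_def sum_product)
  finally show ?thesis .
qed

lemma lin_ext_aff_vanish_on_mb_ideal:
  assumes "a \<in> mb_ideal r"
  shows "lin_ext (aff_e u) a = 0" and "lin_ext (aff_f u v) a = 0"
  using assms
  by (induction rule: mb_ideal.induct)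
     (simp_all add: lin_ext_add lin_ext_msmult lin_ext_aff_e_mmult lin_ext_aff_f_mmult algebra_simps)

lemma lin_ext_aff_e_indicator:
  "lin_ext (aff_e (\<lambda>i. if i = j then 1 else 0)) p = Poly_Mapping.lookup p (MLeaf j)"
proof -
  have indicator: "aff_e (\<lambda>i. if i = j then 1 else 0) = (\<lambda>t. if t = MLeaf j then 1 else 0)"
    by (rule ext, case_tac t) auto
  show ?thesis
    unfolding lin_ext_def indicator by (simp add: in_keys_iff if_distrib cong: if_cong)
qed

lemma in_Fit_Fr_if_Fit_formula:
  fixes x :: "'k::field magma_alg"
  assumes r: "r \<ge> 2" and x: "x \<in> magma r" and Fit: "Fit_formula r x"
  shows "in_Fit_Fr r x"
proof (rule ccontr)
  assume "\<not> in_Fit_Fr r x"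
  moreover have "fr_eq r x x"
    by (simp add: fr_eq_def mb_ideal.zero)
  ultimately have "x \<notin> magma_sq r"
    unfolding in_Fit_Fr_def by blast
  then obtain j where a: "Poly_Mapping.lookup x (MLeaf j) \<noteq> 0"
    using magma_sq_if_leaf_coeffs_zero[OF x] by blast
  define j' :: nat where "j' = (if j = 0 then 1 else 0)"
  define u :: "nat \<Rightarrow> 'k" where "u i = (if i = j then 1 else 0)" for i
  define v :: "nat \<Rightarrow> 'k" where "v i = (if i = j' then 1 else 0)" for i
  have "j' < r" "j' \<noteq> j"
    using r by (auto simp: j'_def)
  then have "mmult (mmult x (gen j')) x \<in> mb_ideal r"
    using Fit gen_in_magma unfolding Fit_formula_def fr_eq_def by fastforce
  then have "lin_ext (aff_f u v) (mmult (mmult x (gen j')) x) = 0"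
    by (rule lin_ext_aff_vanish_on_mb_ideal)
  moreover have "lin_ext (aff_f u v) (mmult (mmult x (gen j')) x) =
      - Poly_Mapping.lookup x (MLeaf j) * Poly_Mapping.lookup x (MLeaf j)"
    using \<open>j' \<noteq> j\<close> unfolding u_def
    by (simp add: lin_ext_aff_f_mmult lin_ext_aff_e_mmult lin_ext_aff_e_indicator lin_ext_gen v_def)
  ultimately show False
    using a by simp
qed

theorem lemma3p4:
  fixes r n :: nat and b :: "nat \<Rightarrow> 'k::{field,finite} magma_alg"
  assumes "r \<ge> 2" and "n \<le> r"
    and "\<forall>i<n. b i \<in> magma r"
  shows "phi_holds r n b \<longleftrightarrow> lin_indep_mod_Fit r n b"
proof -
  have "lincomb n \<alpha> b \<in> magma r" for \<alpha>
    unfolding lincomb_def using assms(3) by (intro magma_sum magma_msmult) auto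
  then have "Fit_formula r (lincomb n \<alpha> b) \<longleftrightarrow> in_Fit_Fr r (lincomb n \<alpha> b)" for \<alpha>
    using Fit_formula_if_in_Fit_Fr in_Fit_Fr_if_Fit_formula[OF assms(1)] by blast
  then show ?thesis
    unfolding phi_holds_def lin_indep_mod_Fit_def by blast
qed

end
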